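(* The assignments $L\mapsto\operatorname{Spec}L$ and $X\mapsto L_{\mathrm{open}}(X)$ form an adjoint pair of contravariant functors between the category of ideal lattices and the category of spectral spaces: for every ideal lattice $L$ and spectral space $X$ there are mutually inverse natural bijections between morphisms of ideal lattices $L\to L_{\mathrm{open}}(X)$ and continuous maps $X\to\operatorname{Spec}L$, given by $\phi\mapsto\big(x\mapsto\bigvee\{c \text{ compact}\mid x\notin\phi(c)\}\big)$ and $f\mapsto\big(a\mapsto f^{-1}(D(a))\big)$. Moreover, $L_{\mathrm{open}}$ is fully faithful, and an ideal lattice $L$ is isomorphic to one of the form $L_{\mathrm{open}}(X)$ if and only if every element of $L$ is semi-prime.
   Context: An ideal lattice is a poset $(L,\leq)$ with an associative multiplication such that: (L1) $L$ is a complete lattice; (L2) every element is a supremum of compact elements ($a$ is compact if $a\leq\sup A$ implies $a\leq\sup A'$ for some finite $A'\subseteq A$); (L3) multiplication distributes over binary joins on both sides; (L4) $1=\sup L$ is compact and is a two-sided identity; (L5) products of compact elements are compact. A morphism of ideal lattices $\phi\colon L\to L'$ is a map preserving arbitrary suprema, with $\phi(1)=1$ and $\phi(ab)=\phi(a)\phi(b)$. Prime: $p\neq1$ with $ab\leq p\Rightarrow a\leq p$ or $b\leq p$; semi-prime: $bb\leq a\Rightarrow b\leq a$. $\operatorname{Spec}L$: set of primes with closed sets $V(a)=\{p\mid a\leq p\}$, opens $D(a)=\{p\mid a\not\leq p\}$; a morphism $\phi\colon L\to L'$ induces the continuous map $\operatorname{Spec}L'\to\operatorname{Spec}L$, $p\mapsto\sup\{a\mid\phi(a)\leq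 p\}$. $L_{\mathrm{open}}(X)$ is the lattice of open subsets of $X$ with multiplication $U\cap V$; a continuous map $f$ induces $U\mapsto f^{-1}(U)$. A spectral space is a $T_0$, quasi-compact space whose quasi-compact open subsets are closed under finite intersections and form an open basis, and in which every non-empty irreducible closed subset has a generic point. *)

theory Defs
  imports "HOL-Analysis.Analysis"
begin

type_synonym 'a ilat = "'a set \<times> ('a \<Rightarrow> 'a \<Rightarrow> bool) \<times> ('a \<Rightarrow> 'a \<Rightarrow> 'a)"

definition car :: "'a ilat \<Rightarrow> 'a set" where "car L = fst L"
definition leq :: "'a ilat \<Rightarrow> 'a \<Rightarrow> 'a \<Rightarrow> bool" where "leq L = fst (snd L)"
definition mult :: "'a ilat \<Rightarrow> 'a \<Rightarrow> 'a \<Rightarrow> 'a" where "mult L = snd (snd L)"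

definition is_lsup :: "'a ilat \<Rightarrow> 'a set \<Rightarrow> 'a \<Rightarrow> bool" where
  "is_lsup L B s \<longleftrightarrow> s \<in> car L \<and> (\<forall>b\<in>B. leq L b s) \<and>
     (\<forall>t\<in>car L. (\<forall>b\<in>B. leq L b t) \<longrightarrow> leq L s t)"

definition lsup :: "'a ilat \<Rightarrow> 'a set \<Rightarrow> 'a" where
  "lsup L B = (THE s. is_lsup L B s)"

definition ltop :: "'a ilat \<Rightarrow> 'a" where "ltop L = lsup L (car L)"

definition compact_el :: "'a ilat \<Rightarrow> 'a \<Rightarrow> bool" where
  "compact_el L a \<longleftrightarrow> a \<in> car L \<and>
     (\<forall>B \<subseteq> car L. leq L a (lsup L B) \<longrightarrow> (\<exists>B' \<subseteq> B. finite B' \<and> leq L a (lsup L B')))"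

definition ideal_lattice :: "'a ilat \<Rightarrow> bool" where
  "ideal_lattice L \<longleftrightarrow>
     \<comment> \<open>partial order\<close>
     (\<forall>a\<in>car L. leq L a a) \<and>
     (\<forall>a\<in>car L. \<forall>b\<in>car L. leq L a b \<and> leq L b a \<longrightarrow> a = b) \<and>
     (\<forall>a\<in>car L. \<forall>b\<in>car L. \<forall>c\<in>car L. leq L a b \<and> leq L b c \<longrightarrow> leq L a c) \<and>
     \<comment> \<open>associative multiplication on the carrier\<close>
     (\<forall>a\<in>car L. \<forall>b\<in>car L. mult L a b \<in> car L) \<and>
     (\<forall>a\<in>car L. \<forall>b\<in>car L. \<forall>c\<in>car L. mult L (mult L a b) c = mult L a (mult L b c)) \<and>
     \<comment> \<open>(L1) complete lattice\<close>
     (\<forall>B \<subseteq> car L. \<exists>s. is_lsup L B s) \<and>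
     \<comment> \<open>(L2) every element is a supremum of compact elements\<close>
     (\<forall>a\<in>car L. \<exists>C. (\<forall>c\<in>C. compact_el L c) \<and> a = lsup L C) \<and>
     \<comment> \<open>(L3) distributivity over binary joins\<close>
     (\<forall>a\<in>car L. \<forall>b\<in>car L. \<forall>c\<in>car L.
        mult L a (lsup L {b, c}) = lsup L {mult L a b, mult L a c} \<and>
        mult L (lsup L {b, c}) a = lsup L {mult L b a, mult L c a}) \<and>
     \<comment> \<open>(L4) the top element is compact and a two-sided identity\<close>
     compact_el L (ltop L) \<and>
     (\<forall>a\<in>car L. mult L (ltop L) a = a \<and> mult L a (ltop L) = a) \<and>
     \<comment> \<open>(L5) products of compact elements are compact\<close>
     (\<forall>a b. compact_el L a \<and> compact_el L b \<longrightarrow> compact_el L (mult L a b))"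

definition ilat_hom :: "'a ilat \<Rightarrow> 'b ilat \<Rightarrow> ('a \<Rightarrow> 'b) \<Rightarrow> bool" where
  "ilat_hom L L' \<phi> \<longleftrightarrow>
     (\<forall>a\<in>car L. \<phi> a \<in> car L') \<and>
     (\<forall>B \<subseteq> car L. \<phi> (lsup L B) = lsup L' (\<phi> ` B)) \<and>
     \<phi> (ltop L) = ltop L' \<and>
     (\<forall>a\<in>car L. \<forall>b\<in>car L. \<phi> (mult L a b) = mult L' (\<phi> a) (\<phi> b))"

definition ilat_iso :: "'a ilat \<Rightarrow> 'b ilat \<Rightarrow> ('a \<Rightarrow> 'b) \<Rightarrow> bool" where
  "ilat_iso L L' \<phi> \<longleftrightarrow> ilat_hom L L' \<phi> \<and> bij_betw \<phi> (car L) (car L') \<and>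
     ilat_hom L' L (inv_into (car L) \<phi>)"

definition prime_el :: "'a ilat \<Rightarrow> 'a \<Rightarrow> bool" where
  "prime_el L p \<longleftrightarrow> p \<in> car L \<and> p \<noteq> ltop L \<and>
     (\<forall>a\<in>car L. \<forall>b\<in>car L. leq L (mult L a b) p \<longrightarrow> leq L a p \<or> leq L b p)"

definition semiprime_el :: "'a ilat \<Rightarrow> 'a \<Rightarrow> bool" where
  "semiprime_el L a \<longleftrightarrow> a \<in> car L \<and>
     (\<forall>b\<in>car L. leq L (mult L b b) a \<longrightarrow> leq L b a)"

definition Dset :: "'a ilat \<Rightarrow> 'a \<Rightarrow> 'a set" where
  "Dset L a = {p. prime_el L p \<and> \<not> leq L a p}"

definition Spec :: "'a ilat \<Rightarrow> 'a topology" where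
  "Spec L = topology (\<lambda>U. \<exists>a\<in>car L. U = Dset L a)"

definition spec_map :: "'a ilat \<Rightarrow> 'b ilat \<Rightarrow> ('a \<Rightarrow> 'b) \<Rightarrow> 'b \<Rightarrow> 'a" where
  "spec_map L L' \<phi> p = lsup L {a \<in> car L. leq L' (\<phi> a) p}"

definition Lopen :: "'b topology \<Rightarrow> 'b set ilat" where
  "Lopen X = ({U. openin X U}, (\<subseteq>), (\<inter>))"

definition Lopen_map :: "'a topology \<Rightarrow> ('a \<Rightarrow> 'b) \<Rightarrow> 'b set \<Rightarrow> 'a set" where
  "Lopen_map X f U = {x \<in> topspace X. f x \<in> U}"

definition irreducible_closed :: "'a topology \<Rightarrow> 'a set \<Rightarrow> bool" where
  "irreducible_closed X Z \<longleftrightarrow> closedin X Z \<and> Z \<noteq> {} \<and>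
     (\<forall>C1 C2. closedin X C1 \<and> closedin X C2 \<and> Z \<subseteq> C1 \<union> C2 \<longrightarrow> Z \<subseteq> C1 \<or> Z \<subseteq> C2)"

definition spectral_space :: "'a topology \<Rightarrow> bool" where
  "spectral_space X \<longleftrightarrow> t0_space X \<and> compactin X (topspace X) \<and>
     (\<forall>U V. openin X U \<and> compactin X U \<and> openin X V \<and> compactin X V
         \<longrightarrow> compactin X (U \<inter> V)) \<and>
     (\<forall>W. openin X W \<longrightarrow> (\<exists>\<B>. (\<forall>U\<in>\<B>. openin X U \<and> compactin X U) \<and> W = \<Union>\<B>)) \<and>
     (\<forall>Z. irreducible_closed X Z \<longrightarrow> (\<exists>x\<in>Z. X closure_of {x} = Z))"

definition adj_Phi :: "'a ilat \<Rightarrow> ('a \<Rightarrow> 'b set) \<Rightarrow> 'b \<Rightarrow> 'a" where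
  "adj_Phi L \<phi> x = lsup L {c. compact_el L c \<and> x \<notin> \<phi> c}"

definition adj_Psi :: "'a ilat \<Rightarrow> 'b topology \<Rightarrow> ('b \<Rightarrow> 'a) \<Rightarrow> 'a \<Rightarrow> 'b set" where
  "adj_Psi L X f a = {x \<in> topspace X. f x \<in> Dset L a}"

end

(*
  The spectrum is spectral by Krull's lemma: an element avoiding all powers of a compact c lies
  below a prime avoiding c, so D(c) \<subseteq> D(a) forces a power of c below a, which makes D(c) compact;
  the generic point of an irreducible V(a) is the join of everything below all its points.
  Given \<phi> : L \<rightarrow> L_open(X), the open sets \<phi>(c) not containing x determine the prime adj_Phi \<phi> x,
  and adj_Phi, adj_Psi are inverse because a prime is the join of the compacts below it.
  L_open is faithful since X is T0 and full since X is sober: for a morphism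
  L_open(X) \<rightarrow> L_open(Y) and y in Y, the opens U with y \<in> \<phi>(U) form a completely prime filter,
  which is the neighbourhood filter of a unique point. Finally D is injective exactly when
  all elements are semi-prime, because c^n \<le> a then gives c \<le> a.
*)

theory Submission
  imports Defs
begin

section \<open>Ideal lattices\<close>

lemma lsup_eqI:
  assumes "is_lsup L B s"
    and "\<And>a b. a \<in> car L \<Longrightarrow> b \<in> car L \<Longrightarrow> leq L a b \<Longrightarrow> leq L b a \<Longrightarrow> a = b"
  shows "lsup L B = s"
  unfolding lsup_def
proof (rule the_equality)
  show "is_lsup L B s" by fact
  fix t assume "is_lsup L B t"
  with assms show "t = s" unfolding is_lsup_def by metis
qed

primrec lpow :: "'a ilat \<Rightarrow> 'a \<Rightarrow> nat \<Rightarrow> 'a" where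
  "lpow L c 0 = ltop L"
| "lpow L c (Suc n) = mult L (lpow L c n) c"

locale ilattice =
  fixes L :: "'a ilat"
  assumes ideal_lattice: "ideal_lattice L"
begin

lemma refl: "a \<in> car L \<Longrightarrow> leq L a a"
  and antisym: "a \<in> car L \<Longrightarrow> b \<in> car L \<Longrightarrow> leq L a b \<Longrightarrow> leq L b a \<Longrightarrow> a = b"
  and trans: "leq L a b \<Longrightarrow> leq L b c \<Longrightarrow> a \<in> car L \<Longrightarrow> b \<in> car L \<Longrightarrow> c \<in> car L \<Longrightarrow> leq L a c"
  and mult_closed: "a \<in> car L \<Longrightarrow> b \<in> car L \<Longrightarrow> mult L a b \<in> car L"
  and mult_assoc: "a \<in> car L \<Longrightarrow> b \<in> car L \<Longrightarrow> c \<in> car L \<Longrightarrow>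
    mult L (mult L a b) c = mult L a (mult L b c)"
  and lsup_exists: "B \<subseteq> car L \<Longrightarrow> \<exists>s. is_lsup L B s"
  and sup_of_compacts: "a \<in> car L \<Longrightarrow> \<exists>C. (\<forall>c\<in>C. compact_el L c) \<and> a = lsup L C"
  and distrib: "a \<in> car L \<Longrightarrow> b \<in> car L \<Longrightarrow> c \<in> car L \<Longrightarrow>
    mult L a (lsup L {b, c}) = lsup L {mult L a b, mult L a c} \<and>
    mult L (lsup L {b, c}) a = lsup L {mult L b a, mult L c a}"
  and compact_top: "compact_el L (ltop L)"
  and mult_top: "a \<in> car L \<Longrightarrow> mult L (ltop L) a = a \<and> mult L a (ltop L) = a"
  and compact_mult: "compact_el L a \<Longrightarrow> compact_el L b \<Longrightarrow> compact_el L (mult L a b)"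
  using ideal_lattice unfolding ideal_lattice_def by (simp_all (no_asm_simp))

lemma is_lsup_lsup: "B \<subseteq> car L \<Longrightarrow> is_lsup L B (lsup L B)"
  using lsup_exists lsup_eqI antisym by metis

lemma lsup_closed: "B \<subseteq> car L \<Longrightarrow> lsup L B \<in> car L"
  and lsup_upper: "B \<subseteq> car L \<Longrightarrow> b \<in> B \<Longrightarrow> leq L b (lsup L B)"
  and lsup_least: "B \<subseteq> car L \<Longrightarrow> t \<in> car L \<Longrightarrow> (\<And>b. b \<in> B \<Longrightarrow> leq L b t) \<Longrightarrow> leq L (lsup L B) t"
  using is_lsup_lsup unfolding is_lsup_def by blast+

lemma lsup_unique: "is_lsup L B s \<Longrightarrow> lsup L B = s"
  using lsup_eqI antisym by metis

lemma lsup_le_iff: "B \<subseteq> car L \<Longrightarrow> t \<in> car L \<Longrightarrow> leq L (lsup L B) t \<longleftrightarrow> (\<forall>b\<in>B. leq L b t)"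
  by (meson lsup_closed lsup_least lsup_upper subsetD trans)

lemma lsup_mono: "B \<subseteq> C \<Longrightarrow> C \<subseteq> car L \<Longrightarrow> leq L (lsup L B) (lsup L C)"
  by (rule lsup_least) (auto intro: lsup_closed lsup_upper)

lemma lsup_pair_eq: "a \<in> car L \<Longrightarrow> b \<in> car L \<Longrightarrow> leq L a b \<Longrightarrow> lsup L {a, b} = b"
  by (rule lsup_unique) (auto simp: is_lsup_def refl)

lemma top_closed: "ltop L \<in> car L"
  unfolding ltop_def by (rule lsup_closed) simp

lemma le_top: "a \<in> car L \<Longrightarrow> leq L a (ltop L)"
  unfolding ltop_def by (rule lsup_upper) auto

lemma top_le_iff: "a \<in> car L \<Longrightarrow> leq L (ltop L) a \<longleftrightarrow> a = ltop L"
  using antisym le_top refl top_closed by blast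

lemma mult_mono_right:
  assumes "a \<in> car L" "b \<in> car L" "c \<in> car L" "leq L a b"
  shows "leq L (mult L c a) (mult L c b)"
proof -
  have "mult L c b = lsup L {mult L c a, mult L c b}"
    using distrib[of c a b] lsup_pair_eq[of a b] assms by simp
  then show ?thesis using lsup_upper[of "{mult L c a, mult L c b}"] assms mult_closed by auto
qed

lemma mult_mono_left:
  assumes "a \<in> car L" "b \<in> car L" "c \<in> car L" "leq L a b"
  shows "leq L (mult L a c) (mult L b c)"
proof -
  have "mult L b c = lsup L {mult L a c, mult L b c}"
    using distrib[of c a b] lsup_pair_eq[of a b] assms by simp
  then show ?thesis using lsup_upper[of "{mult L a c, mult L b c}"] assms mult_closed by auto
qed

lemma mult_le_left: "a \<in> car L \<Longrightarrow> b \<in> car L \<Longrightarrow> leq L (mult L a b) a"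
  using mult_mono_right[of b "ltop L" a] le_top top_closed mult_top by auto

lemma mult_le_right: "a \<in> car L \<Longrightarrow> b \<in> car L \<Longrightarrow> leq L (mult L a b) b"
  using mult_mono_left[of a "ltop L" b] le_top top_closed mult_top by auto

lemma compact_closed: "compact_el L c \<Longrightarrow> c \<in> car L"
  unfolding compact_el_def by blast

lemma compact_le_finite_lsup:
  "compact_el L c \<Longrightarrow> B \<subseteq> car L \<Longrightarrow> leq L c (lsup L B) \<Longrightarrow> \<exists>B'\<subseteq>B. finite B' \<and> leq L c (lsup L B')"
  unfolding compact_el_def by blast

lemma lsup_compacts_below:
  assumes a: "a \<in> car L"
  shows "lsup L {c. compact_el L c \<and> leq L c a} = a"
proof -
  obtain C where C: "\<forall>c\<in>C. compact_el L c" "a = lsup L C"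
    using sup_of_compacts a by blast
  have S: "{c. compact_el L c \<and> leq L c a} \<subseteq> car L"
    using compact_closed by blast
  have "C \<subseteq> car L"
    using C compact_closed by blast
  then have "C \<subseteq> {c. compact_el L c \<and> leq L c a}"
    using C lsup_upper by auto
  then have "leq L a (lsup L {c. compact_el L c \<and> leq L c a})"
    using lsup_mono S C by metis
  moreover have "leq L (lsup L {c. compact_el L c \<and> leq L c a}) a"
    using lsup_least[OF S a] by blast
  ultimately show ?thesis using antisym a lsup_closed[OF S] by blast
qed

lemma compact_lsup_finite:
  assumes F: "finite F" "\<forall>c\<in>F. compact_el L c"
  shows "compact_el L (lsup L F)"
  unfolding compact_el_def
proof (intro conjI allI impI)
  have Fc: "F \<subseteq> car L" using F compact_closed by blast
  then show "lsup L F \<in> car L" by (rule lsup_closed)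
  fix B assume B: "B \<subseteq> car L" "leq L (lsup L F) (lsup L B)"
  have "\<exists>B'. B' \<subseteq> B \<and> finite B' \<and> leq L c (lsup L B')" if c: "c \<in> F" for c
  proof -
    have "leq L c (lsup L B)"
      using trans[OF lsup_upper[OF Fc c] B(2)] Fc c lsup_closed B by blast
    then show ?thesis using compact_le_finite_lsup F(2) c B(1) by blast
  qed
  then obtain g where g: "\<forall>c\<in>F. g c \<subseteq> B \<and> finite (g c) \<and> leq L c (lsup L (g c))"
    by metis
  have gB: "\<Union>(g ` F) \<subseteq> B" "finite (\<Union>(g ` F))" using g F by auto
  have "leq L (lsup L F) (lsup L (\<Union>(g ` F)))"
  proof (rule lsup_least[OF Fc])
    show "lsup L (\<Union>(g ` F)) \<in> car L" using gB B lsup_closed by blast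
    fix c assume c: "c \<in> F"
    have "leq L (lsup L (g c)) (lsup L (\<Union>(g ` F)))"
      using lsup_mono[of "g c"] c gB B by blast
    moreover have "g c \<subseteq> car L" "\<Union>(g ` F) \<subseteq> car L" using c g gB B by auto
    ultimately show "leq L c (lsup L (\<Union>(g ` F)))"
      using trans[of c "lsup L (g c)"] g c Fc lsup_closed by blast
  qed
  then show "\<exists>B'\<subseteq>B. finite B' \<and> leq L (lsup L F) (lsup L B')" using gB by blast
qed

section \<open>Krull's lemma\<close>

lemma lpow_closed: "c \<in> car L \<Longrightarrow> lpow L c n \<in> car L"
  by (induction n) (simp_all add: top_closed mult_closed)

lemma lpow_add: "c \<in> car L \<Longrightarrow> mult L (lpow L c m) (lpow L c n) = lpow L c (m + n)"
  by (induction n) (simp_all add: mult_top lpow_closed mult_assoc[symmetric])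

lemma lpow_one: "c \<in> car L \<Longrightarrow> lpow L c 1 = c"
  by (simp add: mult_top)

lemma compact_lpow: "compact_el L c \<Longrightarrow> compact_el L (lpow L c n)"
  by (induction n) (simp_all add: compact_top compact_mult)

lemma lpow_antimono:
  assumes "c \<in> car L" "m \<le> n"
  shows "leq L (lpow L c n) (lpow L c m)"
  using assms(2)
proof (induction n rule: dec_induct)
  case (step k)
  have "leq L (lpow L c (Suc k)) (lpow L c k)"
    using mult_le_left[OF lpow_closed[OF assms(1)] assms(1)] by simp
  then show ?case
    using trans step.IH lpow_closed assms(1) by blast
qed (simp add: refl lpow_closed assms(1))

lemma finite_chain_has_greatest:
  assumes "finite F" "F \<noteq> {}" "F \<subseteq> car L" "\<forall>a\<in>F. \<forall>b\<in>F. leq L a b \<or> leq L b a"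
  shows "\<exists>m\<in>F. \<forall>f\<in>F. leq L f m"
  using assms
proof (induction F rule: finite_ne_induct)
  case (singleton x)
  then show ?case using refl by auto
next
  case (insert x F)
  then obtain m where m: "m \<in> F" "\<forall>f\<in>F. leq L f m" by auto
  show ?case
  proof (cases "leq L x m")
    case True
    then show ?thesis using m by auto
  next
    case False
    then have "leq L m x" using insert m by auto
    moreover have "m \<in> car L" "x \<in> car L" using insert m by auto
    ultimately have "\<forall>f\<in>F. leq L f x"
      using m(2) insert.prems(1) trans[of _ m x] by blast
    then have "\<forall>f\<in>insert x F. leq L f x"
      using refl \<open>x \<in> car L\<close> by blast
    then show ?thesis by auto
  qed
qed

lemma compact_not_le_lsup_chain:
  assumes d: "compact_el L d" and C: "C \<subseteq> car L" "C \<noteq> {}"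
    and chain: "\<forall>a\<in>C. \<forall>b\<in>C. leq L a b \<or> leq L b a" and not_le: "\<forall>q\<in>C. \<not> leq L d q"
  shows "\<not> leq L d (lsup L C)"
proof
  assume "leq L d (lsup L C)"
  then obtain F where F: "F \<subseteq> C" "finite F" "leq L d (lsup L F)"
    using compact_le_finite_lsup[OF d C(1)] by blast
  have "\<exists>k\<in>C. \<forall>f\<in>F. leq L f k"
  proof (cases "F = {}")
    case True
    then show ?thesis using C by blast
  next
    case False
    then show ?thesis
      using finite_chain_has_greatest[OF F(2) False] F(1) C(1) chain by blast
  qed
  then obtain k where k: "k \<in> C" "\<forall>f\<in>F. leq L f k" by blast
  have "leq L (lsup L F) k"
    using lsup_least k F(1) C(1) by blast
  then have "leq L d k"
    using trans[OF F(3)] compact_closed[OF d] lsup_closed F(1) C(1) k(1) by blast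
  then show False using not_le k(1) by blast
qed

lemma lsup_pair_mult_le:
  assumes m: "m \<in> car L" and x: "x \<in> car L" and y: "y \<in> car L" and xy: "leq L (mult L x y) m"
  shows "leq L (mult L (lsup L {m, x}) (lsup L {m, y})) m"
proof -
  have mx: "lsup L {m, x} \<in> car L" using lsup_closed m x by simp
  have "leq L (mult L (lsup L {m, x}) y) m"
    unfolding distrib[OF y m x, THEN conjunct2]
    by (rule lsup_least) (use m x y xy mult_le_left mult_closed in auto)
  moreover have "leq L (mult L (lsup L {m, x}) m) m"
    using mult_le_right[OF mx m] .
  ultimately show ?thesis
    unfolding distrib[OF mx m y, THEN conjunct1]
    by (intro lsup_least) (use m y mx mult_closed in auto)
qed

lemma prime_if_maximal_avoiding_lpow:
  assumes m: "m \<in> car L" and c: "c \<in> car L" and avoid: "\<And>n. \<not> leq L (lpow L c n) m"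
    and maximal: "\<And>x. x \<in> car L \<Longrightarrow> \<not> leq L x m \<Longrightarrow> \<exists>n. leq L (lpow L c n) (lsup L {m, x})"
  shows "prime_el L m"
  unfolding prime_el_def
proof (intro conjI ballI impI)
  show "m \<noteq> ltop L" using avoid[of 0] refl[OF m] by auto
  fix x y assume x: "x \<in> car L" and y: "y \<in> car L" and xy: "leq L (mult L x y) m"
  show "leq L x m \<or> leq L y m"
  proof (rule ccontr)
    assume "\<not> (leq L x m \<or> leq L y m)"
    then obtain i j where i: "leq L (lpow L c i) (lsup L {m, x})"
      and j: "leq L (lpow L c j) (lsup L {m, y})"
      using maximal x y by blast
    have mx: "lsup L {m, x} \<in> car L" and my: "lsup L {m, y} \<in> car L"
      using lsup_closed m x y by simp_all
    have ci: "lpow L c i \<in> car L" and cj: "lpow L c j \<in> car L"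
      using lpow_closed c by blast+
    have "leq L (mult L (lpow L c i) (lpow L c j)) (mult L (lsup L {m, x}) (lpow L c j))"
      using mult_mono_left[OF ci mx cj i] .
    moreover have "leq L (mult L (lsup L {m, x}) (lpow L c j)) (mult L (lsup L {m, x}) (lsup L {m, y}))"
      using mult_mono_right[OF cj my mx j] .
    moreover have "leq L (mult L (lsup L {m, x}) (lsup L {m, y})) m"
      using lsup_pair_mult_le[OF m x y xy] .
    ultimately have "leq L (mult L (lpow L c i) (lpow L c j)) m"
      using trans mult_closed ci cj mx my m by meson
    then have "leq L (lpow L c (i + j)) m"
      using lpow_add[OF c] by simp
    then show False using avoid by blast
  qed
qed (fact m)

lemma maximal_above_avoiding_lpow:
  assumes s: "s \<in> car L" and c: "compact_el L c" and avoid: "\<And>n. \<not> leq L (lpow L c n) s"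
  obtains m where "m \<in> car L" "leq L s m" "\<And>n. \<not> leq L (lpow L c n) m"
    and "\<And>q. q \<in> car L \<Longrightarrow> leq L m q \<Longrightarrow> \<forall>n. \<not> leq L (lpow L c n) q \<Longrightarrow> q = m"
proof -
  define S where "S = {q \<in> car L. leq L s q \<and> (\<forall>n. \<not> leq L (lpow L c n) q)}"
  have S_car: "S \<subseteq> car L" unfolding S_def by blast
  have po: "partial_order_on S (relation_of (leq L) S)"
  proof (rule partial_order_on_relation_ofI)
    fix a b d assume "a \<in> S" "b \<in> S" "d \<in> S" "leq L a b" "leq L b d"
    then show "leq L a d" using trans[of a b d] S_car by blast
  qed (use S_car refl antisym in blast)+
  have chain_bound: "\<exists>u\<in>S. \<forall>a\<in>C. leq L a u" if C: "C \<in> Chains (relation_of (leq L) S)" for C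
  proof (cases "C = {}")
    case True
    then show ?thesis using s avoid refl unfolding S_def by blast
  next
    case False
    then obtain k where k: "k \<in> C" by blast
    have CS: "C \<subseteq> S" using Chains_relation_of[OF C] .
    then have C_car: "C \<subseteq> car L" using S_car by blast
    have chain: "\<forall>a\<in>C. \<forall>b\<in>C. leq L a b \<or> leq L b a"
      using C unfolding Chains_def relation_of_def by blast
    have "leq L s (lsup L C)"
      using trans[of s k] k CS s lsup_upper[OF C_car k] lsup_closed[OF C_car] S_car
      unfolding S_def by blast
    moreover have "\<not> leq L (lpow L c n) (lsup L C)" for n
      using compact_not_le_lsup_chain[OF compact_lpow[OF c] C_car False chain] CS
      unfolding S_def by blast
    ultimately have "lsup L C \<in> S"
      unfolding S_def using lsup_closed[OF C_car] by blast
    then show ?thesis using lsup_upper[OF C_car] by blast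
  qed
  obtain m where "m \<in> S" and maximal: "\<And>a. a \<in> S \<Longrightarrow> leq L m a \<Longrightarrow> a = m"
    using predicate_Zorn[OF po chain_bound] by blast
  then have m: "m \<in> car L" "leq L s m" "\<And>n. \<not> leq L (lpow L c n) m"
    unfolding S_def by blast+
  moreover have "q = m" if "q \<in> car L" "leq L m q" "\<forall>n. \<not> leq L (lpow L c n) q" for q
  proof -
    have "leq L s q" using trans[OF m(2) that(2) s m(1) that(1)] .
    then show ?thesis using maximal that unfolding S_def by blast
  qed
  ultimately show thesis using that by blast
qed

lemma prime_above_avoiding_lpow:
  assumes s: "s \<in> car L" and c: "compact_el L c" and avoid: "\<And>n. \<not> leq L (lpow L c n) s"
  shows "\<exists>p. prime_el L p \<and> leq L s p \<and> \<not> leq L c p"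
proof -
  obtain m where m: "m \<in> car L" "leq L s m" "\<And>n. \<not> leq L (lpow L c n) m"
    and maximal: "\<And>q. q \<in> car L \<Longrightarrow> leq L m q \<Longrightarrow> \<forall>n. \<not> leq L (lpow L c n) q \<Longrightarrow> q = m"
    using maximal_above_avoiding_lpow[OF s c avoid] by blast
  have "\<exists>n. leq L (lpow L c n) (lsup L {m, x})" if x: "x \<in> car L" "\<not> leq L x m" for x
  proof (rule ccontr)
    assume "\<nexists>n. leq L (lpow L c n) (lsup L {m, x})"
    moreover have "lsup L {m, x} \<in> car L" "leq L m (lsup L {m, x})"
      using lsup_closed lsup_upper m(1) x(1) by auto
    ultimately have "lsup L {m, x} = m" using maximal by blast
    then show False using lsup_upper[of "{m, x}" x] m(1) x by simp
  qed
  then have "prime_el L m"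
    using prime_if_maximal_avoiding_lpow[OF m(1) compact_closed[OF c] m(3)] by blast
  moreover have "\<not> leq L c m"
    using m(3)[of 1] lpow_one[OF compact_closed[OF c]] by simp
  ultimately show ?thesis using m(2) by blast
qed

section \<open>The spectrum\<close>

lemma prime_closed: "prime_el L p \<Longrightarrow> p \<in> car L"
  unfolding prime_el_def by blast

lemma prime_neq_top: "prime_el L p \<Longrightarrow> p \<noteq> ltop L"
  unfolding prime_el_def by blast

lemma prime_not_le_lpow:
  assumes p: "prime_el L p" and c: "c \<in> car L" "\<not> leq L c p"
  shows "\<not> leq L (lpow L c n) p"
proof (induction n)
  case 0
  show ?case using p by (simp add: top_le_iff prime_closed prime_neq_top)
next
  case (Suc n)
  then show ?case using p c lpow_closed[OF c(1)] unfolding prime_el_def by auto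
qed

lemma Dset_mono:
  assumes "a \<in> car L" "b \<in> car L" "leq L a b"
  shows "Dset L a \<subseteq> Dset L b"
proof
  fix p assume "p \<in> Dset L a"
  then have p: "prime_el L p" "\<not> leq L a p" unfolding Dset_def by auto
  then have "\<not> leq L b p" using trans[of a b p] assms prime_closed by blast
  then show "p \<in> Dset L b" using p unfolding Dset_def by blast
qed

lemma Dset_lsup:
  assumes B: "B \<subseteq> car L"
  shows "Dset L (lsup L B) = \<Union>(Dset L ` B)"
  using lsup_le_iff[OF B prime_closed] unfolding Dset_def by blast

lemma Dset_mult:
  assumes a: "a \<in> car L" and b: "b \<in> car L"
  shows "Dset L (mult L a b) = Dset L a \<inter> Dset L b"
proof -
  have "leq L (mult L a b) p \<longleftrightarrow> leq L a p \<or> leq L b p" if p: "prime_el L p" for p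
  proof
    show "leq L (mult L a b) p \<Longrightarrow> leq L a p \<or> leq L b p"
      using p a b unfolding prime_el_def by blast
    have "p \<in> car L" "mult L a b \<in> car L" using prime_closed[OF p] mult_closed[OF a b] .
    then show "leq L a p \<or> leq L b p \<Longrightarrow> leq L (mult L a b) p"
      using trans[OF mult_le_left[OF a b]] trans[OF mult_le_right[OF a b]] a b by blast
  qed
  then show ?thesis unfolding Dset_def by blast
qed

lemma Dset_top: "Dset L (ltop L) = {p. prime_el L p}"
  unfolding Dset_def by (auto simp: top_le_iff prime_closed prime_neq_top)

lemma Dset_subset_Dset_lpow: "c \<in> car L \<Longrightarrow> Dset L c \<subseteq> Dset L (lpow L c n)"
  using prime_not_le_lpow unfolding Dset_def by blast

lemma lpow_le_if_Dset_subset: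
  assumes c: "compact_el L c" and a: "a \<in> car L" and sub: "Dset L c \<subseteq> Dset L a"
  shows "\<exists>n. leq L (lpow L c n) a"
proof (rule ccontr)
  assume "\<nexists>n. leq L (lpow L c n) a"
  then obtain p where "prime_el L p" "leq L a p" "\<not> leq L c p"
    using prime_above_avoiding_lpow[OF a c] by blast
  then show False using sub unfolding Dset_def by blast
qed

lemma Union_Dset:
  assumes "\<forall>U\<in>K. \<exists>a\<in>car L. U = Dset L a"
  shows "\<Union>K = Dset L (lsup L {a \<in> car L. Dset L a \<in> K})"
proof -
  have "\<Union>K = \<Union>(Dset L ` {a \<in> car L. Dset L a \<in> K})"
  proof
    show "\<Union>K \<subseteq> \<Union>(Dset L ` {a \<in> car L. Dset L a \<in> K})"
    proof
      fix p assume "p \<in> \<Union>K"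
      then obtain U where "U \<in> K" "p \<in> U" by blast
      moreover obtain a where "a \<in> car L" "U = Dset L a" using assms \<open>U \<in> K\<close> by blast
      ultimately show "p \<in> \<Union>(Dset L ` {a \<in> car L. Dset L a \<in> K})" by blast
    qed
  qed blast
  then show ?thesis by (simp add: Dset_lsup)
qed

lemma istopology_Dset: "istopology (\<lambda>U. \<exists>a\<in>car L. U = Dset L a)"
  unfolding istopology_def
proof (intro conjI allI impI)
  fix U V assume "\<exists>a\<in>car L. U = Dset L a" "\<exists>b\<in>car L. V = Dset L b"
  then obtain a b where "a \<in> car L" "b \<in> car L" "U = Dset L a" "V = Dset L b" by blast
  then show "\<exists>c\<in>car L. U \<inter> V = Dset L c"
    using Dset_mult mult_closed by blast
next
  fix K assume "\<forall>U\<in>K. \<exists>a\<in>car L. U = Dset L a"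
  then show "\<exists>a\<in>car L. \<Union>K = Dset L a"
    using Union_Dset lsup_closed[of "{a \<in> car L. Dset L a \<in> K}"] by blast
qed

lemma openin_Spec: "openin (Spec L) U \<longleftrightarrow> (\<exists>a\<in>car L. U = Dset L a)"
  unfolding Spec_def using topology_inverse'[OF istopology_Dset] by simp

lemma openin_Spec_Dset: "a \<in> car L \<Longrightarrow> openin (Spec L) (Dset L a)"
  using openin_Spec by blast

lemma topspace_Spec: "topspace (Spec L) = {p. prime_el L p}"
proof -
  have "Dset L (ltop L) \<subseteq> topspace (Spec L)"
    using openin_subset[OF openin_Spec_Dset[OF top_closed]] .
  moreover have "topspace (Spec L) \<subseteq> {p. prime_el L p}"
    unfolding topspace_def openin_Spec Dset_def by blast
  ultimately show ?thesis using Dset_top by blast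
qed

lemma compactin_Spec_Dset:
  assumes c: "compact_el L c"
  shows "compactin (Spec L) (Dset L c)"
  unfolding compactin_def
proof (intro conjI allI impI)
  show "Dset L c \<subseteq> topspace (Spec L)"
    unfolding topspace_Spec Dset_def by blast
  fix \<U> assume \<U>: "(\<forall>U\<in>\<U>. openin (Spec L) U) \<and> Dset L c \<subseteq> \<Union>\<U>"
  define B where "B = {a \<in> car L. Dset L a \<in> \<U>}"
  have B: "B \<subseteq> car L" unfolding B_def by blast
  have "\<Union>\<U> = Dset L (lsup L B)"
    unfolding B_def using \<U> by (intro Union_Dset) (simp add: openin_Spec)
  then obtain n where "leq L (lpow L c n) (lsup L B)"
    using lpow_le_if_Dset_subset[OF c lsup_closed[OF B]] \<U> by auto
  then obtain B' where B': "B' \<subseteq> B" "finite B'" "leq L (lpow L c n) (lsup L B')"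
    using compact_le_finite_lsup[OF compact_lpow[OF c] B] by blast
  have B'_car: "B' \<subseteq> car L" using B' B by blast
  have "Dset L c \<subseteq> Dset L (lpow L c n)"
    using Dset_subset_Dset_lpow[OF compact_closed[OF c]] .
  also have "\<dots> \<subseteq> Dset L (lsup L B')"
    using Dset_mono[OF lpow_closed[OF compact_closed[OF c]] lsup_closed[OF B'_car] B'(3)] .
  also have "\<dots> = \<Union>(Dset L ` B')"
    using Dset_lsup[OF B'_car] .
  finally show "\<exists>\<F>. finite \<F> \<and> \<F> \<subseteq> \<U> \<and> Dset L c \<subseteq> \<Union>\<F>"
    using B' unfolding B_def by (intro exI[of _ "Dset L ` B'"]) auto
qed

lemma Dset_eq_Union_compacts:
  assumes a: "a \<in> car L"
  shows "Dset L a = \<Union>(Dset L ` {c. compact_el L c \<and> leq L c a})"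
  using Dset_lsup[of "{c. compact_el L c \<and> leq L c a}"] lsup_compacts_below[OF a] compact_closed
  by auto

lemma compact_open_Spec:
  assumes "openin (Spec L) U" "compactin (Spec L) U"
  shows "\<exists>c. compact_el L c \<and> U = Dset L c"
proof -
  obtain a where a: "a \<in> car L" "U = Dset L a"
    using assms(1) openin_Spec by blast
  define C where "C = {c. compact_el L c \<and> leq L c a}"
  have C_car: "C \<subseteq> car L" unfolding C_def using compact_closed by blast
  have U_eq: "U = \<Union>(Dset L ` C)"
    unfolding C_def a(2) using Dset_eq_Union_compacts[OF a(1)] .
  obtain \<F> where \<F>: "finite \<F>" "\<F> \<subseteq> Dset L ` C" "U \<subseteq> \<Union>\<F>"
    using compactinD[OF assms(2) _ equalityD1[OF U_eq]] openin_Spec_Dset C_car by blast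
  then obtain F where F: "finite F" "F \<subseteq> C" "\<F> = Dset L ` F"
    using finite_subset_image[OF \<F>(1,2)] by blast
  have F_car: "F \<subseteq> car L" using F(2) C_car by blast
  have "\<Union>(Dset L ` F) \<subseteq> U"
    unfolding U_eq using F(2) by blast
  then have "U = Dset L (lsup L F)"
    unfolding Dset_lsup[OF F_car] using \<F>(3) F(3) by auto
  moreover have "compact_el L (lsup L F)"
    using compact_lsup_finite[OF F(1)] F(2) unfolding C_def by blast
  ultimately show ?thesis by blast
qed

lemma closedin_Spec_iff:
  "closedin (Spec L) Z \<longleftrightarrow> (\<exists>a\<in>car L. Z = {p. prime_el L p \<and> leq L a p})"
proof
  assume "closedin (Spec L) Z"
  then obtain a where "a \<in> car L" "topspace (Spec L) - Z = Dset L a" "Z \<subseteq> topspace (Spec L)"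
    unfolding closedin_def openin_Spec by blast
  then show "\<exists>a\<in>car L. Z = {p. prime_el L p \<and> leq L a p}"
    unfolding topspace_Spec Dset_def by (intro bexI[of _ a]) auto
next
  assume "\<exists>a\<in>car L. Z = {p. prime_el L p \<and> leq L a p}"
  then obtain a where "a \<in> car L" "Z = {p. prime_el L p \<and> leq L a p}" by blast
  moreover have "topspace (Spec L) - {p. prime_el L p \<and> leq L a p} = Dset L a"
    unfolding topspace_Spec Dset_def by blast
  ultimately show "closedin (Spec L) Z"
    unfolding closedin_def using openin_Spec_Dset topspace_Spec by auto
qed

lemma closure_of_Spec_singleton:
  assumes p: "prime_el L p"
  shows "Spec L closure_of {p} = {q. prime_el L q \<and> leq L p q}"
proof (rule closure_of_unique)
  show "{p} \<subseteq> {q. prime_el L q \<and> leq L p q}"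
    using p refl[OF prime_closed[OF p]] by simp
  show "closedin (Spec L) {q. prime_el L q \<and> leq L p q}"
    unfolding closedin_Spec_iff using prime_closed[OF p] by blast
  fix Z assume "{p} \<subseteq> Z" "closedin (Spec L) Z"
  then obtain b where b: "b \<in> car L" "Z = {q. prime_el L q \<and> leq L b q}" "leq L b p"
    unfolding closedin_Spec_iff by auto
  show "{q. prime_el L q \<and> leq L p q} \<subseteq> Z"
    unfolding b(2) using trans[OF b(3)] b(1) prime_closed[OF p] prime_closed by blast
qed

lemma t0_space_Spec: "t0_space (Spec L)"
  unfolding t0_space_def topspace_Spec
proof (intro ballI impI)
  fix p q assume "p \<in> {p. prime_el L p}" "q \<in> {p. prime_el L p}" "p \<noteq> q"
  then have p: "p \<in> car L" "prime_el L p" and q: "q \<in> car L" "prime_el L q"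
    using prime_closed by auto
  show "\<exists>U. openin (Spec L) U \<and> (p \<notin> U \<longleftrightarrow> q \<in> U)"
  proof (cases "leq L p q")
    case True
    then have "\<not> leq L q p" using antisym p q \<open>p \<noteq> q\<close> by blast
    then show ?thesis
      using openin_Spec_Dset[OF q(1)] p q refl unfolding Dset_def by blast
  next
    case False
    then show ?thesis
      using openin_Spec_Dset[OF p(1)] p q refl unfolding Dset_def by blast
  qed
qed

text \<open>Irreducibility of \<open>Z\<close> is exactly what makes the largest element below all of \<open>Z\<close> prime.\<close>

lemma prime_lsup_lower_bounds:
  assumes Z: "irreducible_closed (Spec L) Z"
  shows "prime_el L (lsup L {b \<in> car L. \<forall>q\<in>Z. leq L b q})"
proof -
  define P where "P = {b \<in> car L. \<forall>q\<in>Z. leq L b q}"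
  have P_car: "P \<subseteq> car L" unfolding P_def by blast
  have Z_prime: "Z \<subseteq> {q. prime_el L q}" and "Z \<noteq> {}" and irreducible:
    "\<And>C1 C2. closedin (Spec L) C1 \<Longrightarrow> closedin (Spec L) C2 \<Longrightarrow> Z \<subseteq> C1 \<union> C2 \<Longrightarrow> Z \<subseteq> C1 \<or> Z \<subseteq> C2"
    using Z closedin_subset[of "Spec L" Z] unfolding irreducible_closed_def topspace_Spec by auto
  have le_Z: "leq L (lsup L P) q" if "q \<in> Z" for q
    using that Z_prime prime_closed by (intro lsup_least[OF P_car]) (auto simp: P_def)
  show ?thesis
    unfolding prime_el_def P_def[symmetric]
  proof (intro conjI ballI impI)
    show "lsup L P \<in> car L" using lsup_closed[OF P_car] .
    obtain q where q: "q \<in> Z" using \<open>Z \<noteq> {}\<close> by blast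
    then have "prime_el L q" using Z_prime by blast
    then show "lsup L P \<noteq> ltop L"
      using le_Z[OF q] top_le_iff[OF prime_closed] prime_neq_top by auto
    fix x y assume x: "x \<in> car L" and y: "y \<in> car L" and xy: "leq L (mult L x y) (lsup L P)"
    have "Z \<subseteq> {q. prime_el L q \<and> leq L x q} \<union> {q. prime_el L q \<and> leq L y q}"
    proof
      fix q assume q: "q \<in> Z"
      then have "prime_el L q" using Z_prime by blast
      moreover have "leq L (mult L x y) q"
        using trans[OF xy le_Z[OF q] mult_closed[OF x y] lsup_closed[OF P_car] prime_closed]
          \<open>prime_el L q\<close> .
      ultimately show "q \<in> {q. prime_el L q \<and> leq L x q} \<union> {q. prime_el L q \<and> leq L y q}"
        using x y unfolding prime_el_def by blast
    qed
    moreover have "closedin (Spec L) {q. prime_el L q \<and> leq L b q}" if "b \<in> car L" for b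
      unfolding closedin_Spec_iff using that by blast
    ultimately have "Z \<subseteq> {q. prime_el L q \<and> leq L x q} \<or> Z \<subseteq> {q. prime_el L q \<and> leq L y q}"
      using irreducible x y by blast
    then have "x \<in> P \<or> y \<in> P" unfolding P_def using x y by blast
    then show "leq L x (lsup L P) \<or> leq L y (lsup L P)" using lsup_upper[OF P_car] by blast
  qed
qed

lemma Spec_generic_point:
  assumes Z: "irreducible_closed (Spec L) Z"
  shows "\<exists>p\<in>Z. Spec L closure_of {p} = Z"
proof -
  have "closedin (Spec L) Z" using Z unfolding irreducible_closed_def by blast
  then obtain a where a: "a \<in> car L" and Z_eq: "Z = {q. prime_el L q \<and> leq L a q}"
    unfolding closedin_Spec_iff by blast
  define P where "P = {b \<in> car L. \<forall>q\<in>Z. leq L b q}"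
  define p where "p = lsup L P"
  have P_car: "P \<subseteq> car L" unfolding P_def by blast
  have p: "prime_el L p" unfolding p_def P_def using prime_lsup_lower_bounds[OF Z] .
  have "a \<in> P" unfolding P_def Z_eq using a by blast
  then have ap: "leq L a p" unfolding p_def using lsup_upper[OF P_car] by blast
  have pq: "leq L p q" if "q \<in> Z" for q
    unfolding p_def using that Z_eq prime_closed by (intro lsup_least[OF P_car]) (auto simp: P_def)
  have "Spec L closure_of {p} = Z"
    unfolding closure_of_Spec_singleton[OF p]
  proof
    show "{q. prime_el L q \<and> leq L p q} \<subseteq> Z"
      unfolding Z_eq using trans[OF ap] a prime_closed[OF p] prime_closed by blast
    show "Z \<subseteq> {q. prime_el L q \<and> leq L p q}"
      using pq unfolding Z_eq by blast
  qed
  moreover have "p \<in> Z"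
    unfolding Z_eq using p ap by blast
  ultimately show ?thesis by blast
qed

lemma spectral_space_Spec: "spectral_space (Spec L)"
  unfolding spectral_space_def
proof (intro conjI allI impI)
  show "compactin (Spec L) (topspace (Spec L))"
    using compactin_Spec_Dset[OF compact_top] Dset_top topspace_Spec by simp
next
  fix U V assume "openin (Spec L) U \<and> compactin (Spec L) U \<and> openin (Spec L) V \<and> compactin (Spec L) V"
  then obtain c d where "compact_el L c" "U = Dset L c" "compact_el L d" "V = Dset L d"
    using compact_open_Spec by blast
  then show "compactin (Spec L) (U \<inter> V)"
    using compactin_Spec_Dset[OF compact_mult] Dset_mult compact_closed by simp
next
  fix W assume "openin (Spec L) W"
  then obtain a where a: "a \<in> car L" "W = Dset L a" using openin_Spec by blast
  then show "\<exists>\<B>. (\<forall>U\<in>\<B>. openin (Spec L) U \<and> compactin (Spec L) U) \<and> W = \<Union>\<B>"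
    using Dset_eq_Union_compacts[OF a(1)] openin_Spec_Dset compactin_Spec_Dset compact_closed
    by (intro exI[of _ "Dset L ` {c. compact_el L c \<and> leq L c a}"]) auto
qed (use t0_space_Spec Spec_generic_point in auto)

end

section \<open>Lattices of open sets and morphisms\<close>

lemma car_Lopen [simp]: "car (Lopen X) = {U. openin X U}"
  and leq_Lopen [simp]: "leq (Lopen X) = (\<subseteq>)"
  and mult_Lopen [simp]: "mult (Lopen X) = (\<inter>)"
  unfolding Lopen_def car_def leq_def mult_def by simp_all

lemma is_lsup_Lopen: "B \<subseteq> {U. openin X U} \<Longrightarrow> is_lsup (Lopen X) B (\<Union>B)"
  unfolding is_lsup_def by auto

lemma lsup_Lopen: "B \<subseteq> {U. openin X U} \<Longrightarrow> lsup (Lopen X) B = \<Union>B"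
  by (rule lsup_eqI[OF is_lsup_Lopen]) auto

lemma ltop_Lopen: "ltop (Lopen X) = topspace X"
  unfolding ltop_def by (simp add: lsup_Lopen topspace_def)

lemma compact_el_Lopen: "compact_el (Lopen X) U \<longleftrightarrow> openin X U \<and> compactin X U"
proof
  assume c: "compact_el (Lopen X) U"
  then have U: "openin X U" unfolding compact_el_def by simp
  have "compactin X U"
    unfolding compactin_def
  proof (intro conjI allI impI)
    show "U \<subseteq> topspace X" using openin_subset[OF U] .
    fix \<U> assume \<U>: "(\<forall>V\<in>\<U>. openin X V) \<and> U \<subseteq> \<Union>\<U>"
    then have sub: "\<U> \<subseteq> car (Lopen X)" by auto
    have "lsup (Lopen X) \<U> = \<Union>\<U>" using \<U> by (intro lsup_Lopen) auto
    then have "leq (Lopen X) U (lsup (Lopen X) \<U>)" using \<U> by simp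
    then obtain B' where B': "B' \<subseteq> \<U>" "finite B'" "leq (Lopen X) U (lsup (Lopen X) B')"
      using c sub unfolding compact_el_def by meson
    have "lsup (Lopen X) B' = \<Union>B'" using B' sub by (intro lsup_Lopen) auto
    then show "\<exists>F. finite F \<and> F \<subseteq> \<U> \<and> U \<subseteq> \<Union>F" using B' by auto
  qed
  then show "openin X U \<and> compactin X U" using U by blast
next
  assume U: "openin X U \<and> compactin X U"
  show "compact_el (Lopen X) U"
    unfolding compact_el_def
  proof (intro conjI allI impI)
    show "U \<in> car (Lopen X)" using U by simp
    fix B assume B: "B \<subseteq> car (Lopen X)" "leq (Lopen X) U (lsup (Lopen X) B)"
    have "lsup (Lopen X) B = \<Union>B" using B(1) by (intro lsup_Lopen) auto
    then have "U \<subseteq> \<Union>B" using B(2) by simp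
    then obtain F where F: "finite F" "F \<subseteq> B" "U \<subseteq> \<Union>F"
      using U B(1) unfolding compactin_def by (metis car_Lopen mem_Collect_eq subsetD)
    have "lsup (Lopen X) F = \<Union>F" using F B by (intro lsup_Lopen) auto
    then have "finite F \<and> leq (Lopen X) U (lsup (Lopen X) F)" using F by simp
    then show "\<exists>B'\<subseteq>B. finite B' \<and> leq (Lopen X) U (lsup (Lopen X) B')" using F(2) by blast
  qed
qed

lemma ideal_lattice_Lopen:
  assumes X: "spectral_space X"
  shows "ideal_lattice (Lopen X)"
  unfolding ideal_lattice_def
proof (intro conjI)
  show "\<forall>W\<in>car (Lopen X). \<exists>C. (\<forall>c\<in>C. compact_el (Lopen X) c) \<and> W = lsup (Lopen X) C"
  proof
    fix W assume "W \<in> car (Lopen X)"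
    then obtain \<B> where "\<forall>U\<in>\<B>. openin X U \<and> compactin X U" "W = \<Union>\<B>"
      using X unfolding spectral_space_def by auto
    moreover have "lsup (Lopen X) \<B> = \<Union>\<B>"
      using calculation(1) by (intro lsup_Lopen) auto
    ultimately show "\<exists>C. (\<forall>c\<in>C. compact_el (Lopen X) c) \<and> W = lsup (Lopen X) C"
      by (intro exI[of _ \<B>]) (simp add: compact_el_Lopen)
  qed
  show "compact_el (Lopen X) (ltop (Lopen X))"
    using X by (simp add: compact_el_Lopen ltop_Lopen spectral_space_def)
  show "\<forall>U V. compact_el (Lopen X) U \<and> compact_el (Lopen X) V \<longrightarrow> compact_el (Lopen X) (mult (Lopen X) U V)"
    using X by (simp add: compact_el_Lopen spectral_space_def openin_Int)
  show "\<forall>B\<subseteq>car (Lopen X). \<exists>s. is_lsup (Lopen X) B s"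
  proof (intro allI impI)
    fix B assume "B \<subseteq> car (Lopen X)"
    then show "\<exists>s. is_lsup (Lopen X) B s"
      using is_lsup_Lopen by auto
  qed
  show "\<forall>U\<in>car (Lopen X). mult (Lopen X) (ltop (Lopen X)) U = U \<and> mult (Lopen X) U (ltop (Lopen X)) = U"
    using openin_subset by (auto simp: ltop_Lopen)
  show "\<forall>U\<in>car (Lopen X). \<forall>V\<in>car (Lopen X). \<forall>W\<in>car (Lopen X).
      mult (Lopen X) U (lsup (Lopen X) {V, W}) = lsup (Lopen X) {mult (Lopen X) U V, mult (Lopen X) U W} \<and>
      mult (Lopen X) (lsup (Lopen X) {V, W}) U = lsup (Lopen X) {mult (Lopen X) V U, mult (Lopen X) W U}"
    by (simp add: lsup_Lopen openin_Int Int_Un_distrib Int_Un_distrib2)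
qed (auto simp: openin_Int)

lemma ilat_hom_closed: "ilat_hom L L' \<phi> \<Longrightarrow> a \<in> car L \<Longrightarrow> \<phi> a \<in> car L'"
  and ilat_hom_lsup: "ilat_hom L L' \<phi> \<Longrightarrow> B \<subseteq> car L \<Longrightarrow> \<phi> (lsup L B) = lsup L' (\<phi> ` B)"
  and ilat_hom_ltop: "ilat_hom L L' \<phi> \<Longrightarrow> \<phi> (ltop L) = ltop L'"
  and ilat_hom_mult: "ilat_hom L L' \<phi> \<Longrightarrow> a \<in> car L \<Longrightarrow> b \<in> car L \<Longrightarrow>
    \<phi> (mult L a b) = mult L' (\<phi> a) (\<phi> b)"
  unfolding ilat_hom_def by blast+

lemma ilat_hom_Lopen_lsup:
  assumes "ilat_hom L (Lopen X) \<phi>" "B \<subseteq> car L"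
  shows "\<phi> (lsup L B) = \<Union>(\<phi> ` B)"
proof -
  have "\<phi> ` B \<subseteq> {U. openin X U}"
    using assms ilat_hom_closed[OF assms(1)] by auto
  then show ?thesis
    using ilat_hom_lsup[OF assms] lsup_Lopen by metis
qed

lemma ilat_hom_lsup_pair:
  assumes L: "ideal_lattice L" and \<phi>: "ilat_hom L L' \<phi>"
    and "a \<in> car L" "b \<in> car L" "leq L a b"
  shows "\<phi> b = lsup L' {\<phi> a, \<phi> b}"
proof -
  interpret ilattice L by (fact ilattice.intro[OF L])
  show ?thesis
    using ilat_hom_lsup[OF \<phi>, of "{a, b}"] lsup_pair_eq assms by simp
qed

lemma ilat_hom_mono:
  assumes "ideal_lattice L" "ideal_lattice L'" "ilat_hom L L' \<phi>"
    and "a \<in> car L" "b \<in> car L" "leq L a b"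
  shows "leq L' (\<phi> a) (\<phi> b)"
proof -
  interpret L': ilattice L' by (fact ilattice.intro[OF assms(2)])
  show ?thesis
    using ilat_hom_lsup_pair[OF assms(1,3-6)] L'.lsup_upper[of "{\<phi> a, \<phi> b}"]
      ilat_hom_closed[OF assms(3)] assms(4,5) by simp
qed

lemma ilat_hom_Lopen_mono:
  assumes "ideal_lattice L" "ilat_hom L (Lopen X) \<phi>"
    and "a \<in> car L" "b \<in> car L" "leq L a b"
  shows "\<phi> a \<subseteq> \<phi> b"
  using ilat_hom_lsup_pair[OF assms] ilat_hom_closed[OF assms(2)] assms(3,4)
  by (simp add: lsup_Lopen) blast

lemma spec_map_le_iff:
  assumes L: "ideal_lattice L" and L': "ideal_lattice L'" and \<psi>: "ilat_hom L' L \<psi>"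
    and p: "p \<in> car L" and a: "a \<in> car L'"
  shows "leq L' a (spec_map L' L \<psi> p) \<longleftrightarrow> leq L (\<psi> a) p"
proof -
  interpret L: ilattice L by (fact ilattice.intro[OF L])
  interpret L': ilattice L' by (fact ilattice.intro[OF L'])
  define S where "S = {a \<in> car L'. leq L (\<psi> a) p}"
  have S: "S \<subseteq> car L'" unfolding S_def by blast
  have q: "spec_map L' L \<psi> p = lsup L' S"
    unfolding spec_map_def S_def by simp
  have "leq L (lsup L (\<psi> ` S)) p"
    using ilat_hom_closed[OF \<psi>] S by (intro L.lsup_least[OF _ p]) (auto simp: S_def)
  then have "leq L (\<psi> (lsup L' S)) p"
    using ilat_hom_lsup[OF \<psi> S] by simp
  then show ?thesis
    using ilat_hom_mono[OF L' L \<psi> a L'.lsup_closed[OF S]] L.trans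
      ilat_hom_closed[OF \<psi>] a L'.lsup_closed[OF S] p L'.lsup_upper[OF S, of a]
    unfolding q S_def by blast
qed

lemma prime_spec_map:
  assumes L: "ideal_lattice L" and L': "ideal_lattice L'" and \<psi>: "ilat_hom L' L \<psi>"
    and p: "prime_el L p"
  shows "prime_el L' (spec_map L' L \<psi> p)"
proof -
  interpret L: ilattice L by (fact ilattice.intro[OF L])
  interpret L': ilattice L' by (fact ilattice.intro[OF L'])
  note le_iff = spec_map_le_iff[OF L L' \<psi> L.prime_closed[OF p]]
  show ?thesis
    unfolding prime_el_def
  proof (intro conjI ballI impI)
    show "spec_map L' L \<psi> p \<in> car L'"
      unfolding spec_map_def by (rule L'.lsup_closed) blast
    then show "spec_map L' L \<psi> p \<noteq> ltop L'"
      using le_iff[OF L'.top_closed] ilat_hom_ltop[OF \<psi>] L'.refl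
        L.top_le_iff[OF L.prime_closed[OF p]] L.prime_neq_top[OF p] by auto
    fix x y assume x: "x \<in> car L'" and y: "y \<in> car L'"
      and "leq L' (mult L' x y) (spec_map L' L \<psi> p)"
    then have "leq L (mult L (\<psi> x) (\<psi> y)) p"
      using le_iff[OF L'.mult_closed[OF x y]] ilat_hom_mult[OF \<psi> x y] by simp
    then show "leq L' x (spec_map L' L \<psi> p) \<or> leq L' y (spec_map L' L \<psi> p)"
      using p ilat_hom_closed[OF \<psi>] x y le_iff unfolding prime_el_def by blast
  qed
qed

lemma spec_map_in_Dset_iff:
  assumes L: "ideal_lattice L" and L': "ideal_lattice L'" and \<psi>: "ilat_hom L' L \<psi>"
    and p: "prime_el L p" and a: "a \<in> car L'"
  shows "spec_map L' L \<psi> p \<in> Dset L' a \<longleftrightarrow> p \<in> Dset L (\<psi> a)"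
  using spec_map_le_iff[OF L L' \<psi> _ a] prime_spec_map[OF L L' \<psi> p] p
    ilattice.prime_closed[OF ilattice.intro[OF L]]
  unfolding Dset_def by simp

lemma continuous_map_spec_map:
  assumes L: "ideal_lattice L" and L': "ideal_lattice L'" and \<psi>: "ilat_hom L' L \<psi>"
  shows "continuous_map (Spec L) (Spec L') (spec_map L' L \<psi>)"
proof -
  interpret L: ilattice L by (fact ilattice.intro[OF L])
  interpret L': ilattice L' by (fact ilattice.intro[OF L'])
  have "{p \<in> topspace (Spec L). spec_map L' L \<psi> p \<in> Dset L' a} = Dset L (\<psi> a)"
    if "a \<in> car L'" for a
    using spec_map_in_Dset_iff[OF L L' \<psi> _ that]
    unfolding L.topspace_Spec by (auto simp: Dset_def)
  then show ?thesis
    unfolding continuous_map_def L.topspace_Spec L'.topspace_Spec L'.openin_Spec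
    using prime_spec_map[OF L L' \<psi>] L.openin_Spec_Dset ilat_hom_closed[OF \<psi>]
    by (auto simp: L.topspace_Spec)
qed

lemma spec_map_id:
  assumes L: "ideal_lattice L" and p: "prime_el L p"
  shows "spec_map L L id p = p"
proof -
  interpret ilattice L by (fact ilattice.intro[OF L])
  have "is_lsup L {a \<in> car L. leq L (id a) p} p"
    unfolding is_lsup_def using prime_closed[OF p] refl by auto
  then show ?thesis unfolding spec_map_def by (rule lsup_unique)
qed

lemma spec_map_comp:
  assumes L: "ideal_lattice L" and L': "ideal_lattice L'"
    and \<psi>: "ilat_hom L' L \<psi>" and \<theta>: "ilat_hom L'' L' \<theta>" and p: "p \<in> car L"
  shows "spec_map L'' L (\<psi> \<circ> \<theta>) p = spec_map L'' L' \<theta> (spec_map L' L \<psi> p)"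
proof -
  have "{a \<in> car L''. leq L ((\<psi> \<circ> \<theta>) a) p} = {a \<in> car L''. leq L' (\<theta> a) (spec_map L' L \<psi> p)}"
    using spec_map_le_iff[OF L L' \<psi> p] ilat_hom_closed[OF \<theta>] by auto
  then show ?thesis unfolding spec_map_def by simp
qed

lemma ilat_hom_Lopen_map:
  assumes g: "continuous_map Y X g"
  shows "ilat_hom (Lopen X) (Lopen Y) (Lopen_map Y g)"
proof -
  have opens: "openin Y (Lopen_map Y g U)" if "openin X U" for U
    using g that unfolding continuous_map_def Lopen_map_def by blast
  have "Lopen_map Y g (lsup (Lopen X) B) = lsup (Lopen Y) (Lopen_map Y g ` B)"
    if "B \<subseteq> {U. openin X U}" for B
  proof -
    have "Lopen_map Y g ` B \<subseteq> {U. openin Y U}" using opens that by blast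
    then show ?thesis
      using that by (simp add: lsup_Lopen) (auto simp: Lopen_map_def)
  qed
  moreover have "Lopen_map Y g (topspace X) = topspace Y"
    using continuous_map_image_subset_topspace[OF g] by (auto simp: Lopen_map_def)
  ultimately show ?thesis
    unfolding ilat_hom_def using opens by (auto simp: ltop_Lopen Lopen_map_def)
qed

lemma Lopen_map_id: "openin X U \<Longrightarrow> Lopen_map X id U = U"
  unfolding Lopen_map_def using openin_subset by auto

lemma Lopen_map_comp:
  "continuous_map Z Y h \<Longrightarrow> Lopen_map Z (g \<circ> h) U = Lopen_map Z h (Lopen_map Y g U)"
  unfolding Lopen_map_def continuous_map_def by auto

section \<open>The adjunction\<close>

context ilattice
begin

lemma adj_Phi_closed: "adj_Phi L \<phi> x \<in> car L"
  unfolding adj_Phi_def by (rule lsup_closed) (use compact_closed in blast)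

lemma le_adj_Phi_iff:
  assumes \<phi>: "ilat_hom L (Lopen X) \<phi>" and a: "a \<in> car L"
  shows "leq L a (adj_Phi L \<phi> x) \<longleftrightarrow> x \<notin> \<phi> a"
proof -
  define S where "S = {c. compact_el L c \<and> x \<notin> \<phi> c}"
  have S: "S \<subseteq> car L" unfolding S_def using compact_closed by blast
  have Phi_eq: "adj_Phi L \<phi> x = lsup L S" unfolding adj_Phi_def S_def ..
  have x_notin: "x \<notin> \<phi> (lsup L S)"
    using ilat_hom_Lopen_lsup[OF \<phi> S] unfolding S_def by auto
  show ?thesis
  proof
    assume "leq L a (adj_Phi L \<phi> x)"
    then have "\<phi> a \<subseteq> \<phi> (lsup L S)"
      using ilat_hom_Lopen_mono[OF ideal_lattice \<phi> a lsup_closed[OF S]] Phi_eq by simp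
    then show "x \<notin> \<phi> a" using x_notin by blast
  next
    assume x: "x \<notin> \<phi> a"
    have "{c. compact_el L c \<and> leq L c a} \<subseteq> S"
      using ilat_hom_Lopen_mono[OF ideal_lattice \<phi> compact_closed a] x unfolding S_def by blast
    then show "leq L a (adj_Phi L \<phi> x)"
      using lsup_mono[OF _ S] lsup_compacts_below[OF a] Phi_eq by metis
  qed
qed

lemma prime_adj_Phi:
  assumes \<phi>: "ilat_hom L (Lopen X) \<phi>" and x: "x \<in> topspace X"
  shows "prime_el L (adj_Phi L \<phi> x)"
  unfolding prime_el_def
proof (intro conjI ballI impI)
  show "adj_Phi L \<phi> x \<noteq> ltop L"
  proof
    assume "adj_Phi L \<phi> x = ltop L"
    then have "leq L (ltop L) (adj_Phi L \<phi> x)"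
      using refl[OF top_closed] by simp
    then have "x \<notin> \<phi> (ltop L)"
      using le_adj_Phi_iff[OF \<phi> top_closed] by blast
    then show False
      using ilat_hom_ltop[OF \<phi>] x by (simp add: ltop_Lopen)
  qed
  fix a b assume a: "a \<in> car L" and b: "b \<in> car L" and "leq L (mult L a b) (adj_Phi L \<phi> x)"
  then have "x \<notin> \<phi> a \<inter> \<phi> b"
    using le_adj_Phi_iff[OF \<phi> mult_closed[OF a b]] ilat_hom_mult[OF \<phi> a b] by simp
  then show "leq L a (adj_Phi L \<phi> x) \<or> leq L b (adj_Phi L \<phi> x)"
    using le_adj_Phi_iff[OF \<phi>] a b by blast
qed (fact adj_Phi_closed)

lemma adj_Psi_adj_Phi:
  assumes \<phi>: "ilat_hom L (Lopen X) \<phi>" and a: "a \<in> car L"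
  shows "adj_Psi L X (adj_Phi L \<phi>) a = \<phi> a"
proof -
  have "\<phi> a \<subseteq> topspace X"
    using openin_subset ilat_hom_closed[OF \<phi> a] by simp
  then show ?thesis
    unfolding adj_Psi_def Dset_def
    using le_adj_Phi_iff[OF \<phi> a] prime_adj_Phi[OF \<phi>] by blast
qed

lemma continuous_map_adj_Phi:
  assumes \<phi>: "ilat_hom L (Lopen X) \<phi>"
  shows "continuous_map X (Spec L) (adj_Phi L \<phi>)"
  unfolding continuous_map_def
proof (intro conjI allI impI)
  show "adj_Phi L \<phi> \<in> topspace X \<rightarrow> topspace (Spec L)"
    unfolding topspace_Spec using prime_adj_Phi[OF \<phi>] by blast
  fix U assume "openin (Spec L) U"
  then obtain a where a: "a \<in> car L" "U = Dset L a" using openin_Spec by blast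
  then have "{x \<in> topspace X. adj_Phi L \<phi> x \<in> U} = \<phi> a"
    using adj_Psi_adj_Phi[OF \<phi> a(1)] unfolding adj_Psi_def by simp
  then show "openin X {x \<in> topspace X. adj_Phi L \<phi> x \<in> U}"
    using ilat_hom_closed[OF \<phi> a(1)] by simp
qed

lemma prime_if_continuous_map_Spec:
  "continuous_map X (Spec L) f \<Longrightarrow> x \<in> topspace X \<Longrightarrow> prime_el L (f x)"
  unfolding continuous_map_def topspace_Spec by blast

lemma ilat_hom_adj_Psi:
  assumes f: "continuous_map X (Spec L) f"
  shows "ilat_hom L (Lopen X) (adj_Psi L X f)"
proof -
  have opens: "openin X (adj_Psi L X f a)" if "a \<in> car L" for a
    using f openin_Spec_Dset[OF that] unfolding continuous_map_def adj_Psi_def by blast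
  have "adj_Psi L X f (lsup L B) = lsup (Lopen X) (adj_Psi L X f ` B)" if B: "B \<subseteq> car L" for B
  proof -
    have "adj_Psi L X f ` B \<subseteq> {U. openin X U}" using opens B by blast
    then show ?thesis
      by (simp add: lsup_Lopen adj_Psi_def Dset_lsup[OF B]) blast
  qed
  moreover have "adj_Psi L X f (ltop L) = topspace X"
    unfolding adj_Psi_def Dset_top using prime_if_continuous_map_Spec[OF f] by blast
  moreover have "adj_Psi L X f (mult L a b) = adj_Psi L X f a \<inter> adj_Psi L X f b"
    if "a \<in> car L" "b \<in> car L" for a b
    unfolding adj_Psi_def Dset_mult[OF that] by blast
  ultimately show ?thesis
    unfolding ilat_hom_def using opens by (simp add: ltop_Lopen)
qed

lemma adj_Phi_adj_Psi:
  assumes f: "continuous_map X (Spec L) f" and x: "x \<in> topspace X"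
  shows "adj_Phi L (adj_Psi L X f) x = f x"
proof -
  have "prime_el L (f x)" using prime_if_continuous_map_Spec[OF f x] .
  then have "{c. compact_el L c \<and> x \<notin> adj_Psi L X f c} = {c. compact_el L c \<and> leq L c (f x)}"
    using x unfolding adj_Psi_def Dset_def by auto
  then show ?thesis
    unfolding adj_Phi_def using lsup_compacts_below[OF prime_closed] \<open>prime_el L (f x)\<close> by simp
qed

lemma adj_Phi_cong:
  "(\<And>a. a \<in> car L \<Longrightarrow> \<phi> a = \<phi>' a) \<Longrightarrow> adj_Phi L \<phi> x = adj_Phi L \<phi>' x"
  unfolding adj_Phi_def using compact_closed by metis

end

lemma adj_Psi_natural:
  assumes L: "ideal_lattice L" and L': "ideal_lattice L'" and \<psi>: "ilat_hom L' L \<psi>"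
    and g: "continuous_map Y X g" and f: "continuous_map X (Spec L) f" and a: "a \<in> car L'"
  shows "adj_Psi L' Y (spec_map L' L \<psi> \<circ> f \<circ> g) a = Lopen_map Y g (adj_Psi L X f (\<psi> a))"
proof -
  have "spec_map L' L \<psi> (f (g y)) \<in> Dset L' a \<longleftrightarrow> f (g y) \<in> Dset L (\<psi> a)"
    if "y \<in> topspace Y" for y
    using spec_map_in_Dset_iff[OF L L' \<psi> _ a] that g
      ilattice.prime_if_continuous_map_Spec[OF ilattice.intro[OF L] f]
    by (simp add: continuous_map_def Pi_iff)
  then show ?thesis
    unfolding adj_Psi_def Lopen_map_def using continuous_map_image_subset_topspace[OF g] by auto
qed

text \<open>Naturality of \<open>adj_Phi\<close> follows from that of its inverse \<open>adj_Psi\<close>.\<close>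

lemma adj_Phi_natural:
  assumes L: "ideal_lattice L" and L': "ideal_lattice L'" and \<psi>: "ilat_hom L' L \<psi>"
    and g: "continuous_map Y X g" and \<phi>: "ilat_hom L (Lopen X) \<phi>" and y: "y \<in> topspace Y"
  shows "adj_Phi L' (Lopen_map Y g \<circ> \<phi> \<circ> \<psi>) y = spec_map L' L \<psi> (adj_Phi L \<phi> (g y))"
proof -
  interpret L: ilattice L by (fact ilattice.intro[OF L])
  interpret L': ilattice L' by (fact ilattice.intro[OF L'])
  define f where "f = spec_map L' L \<psi> \<circ> adj_Phi L \<phi> \<circ> g"
  have f: "continuous_map Y (Spec L') f"
    unfolding f_def using continuous_map_spec_map[OF L L' \<psi>] L.continuous_map_adj_Phi[OF \<phi>] g
    by (intro continuous_map_compose)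
  have "adj_Psi L' Y f a = (Lopen_map Y g \<circ> \<phi> \<circ> \<psi>) a" if "a \<in> car L'" for a
    using adj_Psi_natural[OF L L' \<psi> g L.continuous_map_adj_Phi[OF \<phi>] that]
      L.adj_Psi_adj_Phi[OF \<phi> ilat_hom_closed[OF \<psi> that]]
    unfolding f_def by (simp add: comp_assoc)
  then have "adj_Phi L' (Lopen_map Y g \<circ> \<phi> \<circ> \<psi>) y = adj_Phi L' (adj_Psi L' Y f) y"
    by (intro L'.adj_Phi_cong) simp
  also have "\<dots> = f y"
    using L'.adj_Phi_adj_Psi[OF f y] .
  finally show ?thesis unfolding f_def by simp
qed

section \<open>Full faithfulness and essential image\<close>

lemma eq_if_Lopen_map_eq:
  assumes X: "t0_space X" and g: "continuous_map Y X g" and h: "continuous_map Y X h"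
    and eq: "\<And>U. openin X U \<Longrightarrow> Lopen_map Y g U = Lopen_map Y h U" and y: "y \<in> topspace Y"
  shows "g y = h y"
proof (rule ccontr)
  assume "g y \<noteq> h y"
  moreover have "g y \<in> topspace X" "h y \<in> topspace X"
    using g h y by (auto simp: continuous_map_def)
  ultimately obtain U where "openin X U" "g y \<notin> U \<longleftrightarrow> h y \<in> U"
    using X unfolding t0_space_def by blast
  moreover have "g y \<in> U \<longleftrightarrow> h y \<in> U"
    using eq[OF \<open>openin X U\<close>] y unfolding Lopen_map_def by blast
  ultimately show False by blast
qed

text \<open>In a sober space every completely prime filter \<open>F\<close> of open sets is the neighbourhood filter
  of a point: the generic point of the complement of the largest open set outside \<open>F\<close>.\<close>

lemma sober_completely_prime_filter_point:
  assumes sober: "\<And>Z. irreducible_closed X Z \<Longrightarrow> \<exists>x\<in>Z. X closure_of {x} = Z"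
    and top: "topspace X \<in> F"
    and inter: "\<And>U V. openin X U \<Longrightarrow> openin X V \<Longrightarrow> U \<inter> V \<in> F \<longleftrightarrow> U \<in> F \<and> V \<in> F"
    and union: "\<And>\<U>. (\<And>U. U \<in> \<U> \<Longrightarrow> openin X U) \<Longrightarrow> \<Union>\<U> \<in> F \<Longrightarrow> \<exists>U\<in>\<U>. U \<in> F"
  shows "\<exists>x\<in>topspace X. \<forall>U. openin X U \<longrightarrow> (U \<in> F \<longleftrightarrow> x \<in> U)"
proof -
  define W where "W = \<Union>{U. openin X U \<and> U \<notin> F}"
  have W: "openin X W" unfolding W_def by (rule openin_Union) blast
  have "W \<notin> F" using union[of "{U. openin X U \<and> U \<notin> F}"] unfolding W_def by blast
  have notin_iff: "U \<notin> F \<longleftrightarrow> U \<subseteq> W" if U: "openin X U" for U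
  proof
    assume "U \<subseteq> W"
    then have "U \<inter> W = U" by blast
    then show "U \<notin> F" using inter[OF U W] \<open>W \<notin> F\<close> by auto
  qed (use U in \<open>auto simp: W_def\<close>)
  define Z where "Z = topspace X - W"
  have "irreducible_closed X Z"
    unfolding irreducible_closed_def
  proof (intro conjI allI impI)
    show "closedin X Z" unfolding Z_def using W by blast
    show "Z \<noteq> {}"
      using notin_iff[OF openin_topspace] top openin_subset[OF W] unfolding Z_def by blast
    fix C1 C2 assume C: "closedin X C1 \<and> closedin X C2 \<and> Z \<subseteq> C1 \<union> C2"
    then have U: "openin X (topspace X - C1)" "openin X (topspace X - C2)" by auto
    have "(topspace X - C1) \<inter> (topspace X - C2) \<subseteq> W"
      using C unfolding Z_def by blast
    then have "topspace X - C1 \<notin> F \<or> topspace X - C2 \<notin> F"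
      using notin_iff[OF openin_Int[OF U]] inter[OF U] by blast
    then have "topspace X - C1 \<subseteq> W \<or> topspace X - C2 \<subseteq> W"
      using notin_iff U by blast
    then show "Z \<subseteq> C1 \<or> Z \<subseteq> C2" unfolding Z_def by blast
  qed
  then obtain x where x: "x \<in> Z" "X closure_of {x} = Z" using sober by blast
  have "U \<in> F \<longleftrightarrow> x \<in> U" if U: "openin X U" for U
  proof
    assume "U \<in> F"
    then obtain z where "z \<in> U" "z \<notin> W" using notin_iff[OF U] by blast
    then have "z \<in> X closure_of {x}" using x(2) openin_subset[OF U] unfolding Z_def by blast
    then show "x \<in> U" using \<open>z \<in> U\<close> U unfolding in_closure_of by blast
  next
    assume "x \<in> U"
    then show "U \<in> F" using notin_iff[OF U] x(1) unfolding Z_def by blast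
  qed
  moreover have "x \<in> topspace X" using x(1) unfolding Z_def by blast
  ultimately show ?thesis by blast
qed

lemma ilat_hom_Lopen_eq_Lopen_map:
  assumes sober: "\<And>Z. irreducible_closed X Z \<Longrightarrow> \<exists>x\<in>Z. X closure_of {x} = Z"
    and \<phi>: "ilat_hom (Lopen X) (Lopen Y) \<phi>"
  shows "\<exists>g. continuous_map Y X g \<and> (\<forall>U. openin X U \<longrightarrow> \<phi> U = Lopen_map Y g U)"
proof -
  have "\<exists>x\<in>topspace X. \<forall>U. openin X U \<longrightarrow> (U \<in> {V. y \<in> \<phi> V} \<longleftrightarrow> x \<in> U)"
    if y: "y \<in> topspace Y" for y
  proof (rule sober_completely_prime_filter_point[OF sober])
    show "topspace X \<in> {V. y \<in> \<phi> V}"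
      using ilat_hom_ltop[OF \<phi>] y by (simp add: ltop_Lopen)
    show "U \<inter> V \<in> {V. y \<in> \<phi> V} \<longleftrightarrow> U \<in> {V. y \<in> \<phi> V} \<and> V \<in> {V. y \<in> \<phi> V}"
      if "openin X U" "openin X V" for U V
      using ilat_hom_mult[OF \<phi>] that by simp
    show "\<exists>U\<in>\<U>. U \<in> {V. y \<in> \<phi> V}"
      if "\<And>U. U \<in> \<U> \<Longrightarrow> openin X U" "\<Union>\<U> \<in> {V. y \<in> \<phi> V}" for \<U>
      using that ilat_hom_Lopen_lsup[OF \<phi>, of \<U>] by (simp add: lsup_Lopen subset_eq)
  qed
  then obtain g where g: "\<And>y. y \<in> topspace Y \<Longrightarrow> g y \<in> topspace X"
    "\<And>y U. y \<in> topspace Y \<Longrightarrow> openin X U \<Longrightarrow> y \<in> \<phi> U \<longleftrightarrow> g y \<in> U"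
    by simp metis
  have eq: "\<phi> U = Lopen_map Y g U" if "openin X U" for U
    using openin_subset[of Y "\<phi> U"] ilat_hom_closed[OF \<phi>, of U] g(2) that
    unfolding Lopen_map_def by auto
  have "continuous_map Y X g"
    unfolding continuous_map_def
    using g(1) eq ilat_hom_closed[OF \<phi>] by (auto simp: Lopen_map_def)
  then show ?thesis using eq by blast
qed

lemma ilat_hom_inv_into:
  assumes L: "ideal_lattice L" and \<phi>: "ilat_hom L L' \<phi>" and bij: "bij_betw \<phi> (car L) (car L')"
  shows "ilat_hom L' L (inv_into (car L) \<phi>)"
proof -
  interpret ilattice L by (fact ilattice.intro[OF L])
  let ?\<psi> = "inv_into (car L) \<phi>"
  have \<psi>_closed: "?\<psi> b \<in> car L" and \<phi>_\<psi>: "\<phi> (?\<psi> b) = b" if "b \<in> car L'" for b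
    using bij that by (auto simp: bij_betw_def inv_into_into f_inv_into_f)
  have \<psi>_\<phi>: "?\<psi> (\<phi> a) = a" if "a \<in> car L" for a
    using bij that by (simp add: bij_betw_def)
  have "?\<psi> (lsup L' B) = lsup L (?\<psi> ` B)" if B: "B \<subseteq> car L'" for B
  proof -
    have "\<phi> ` ?\<psi> ` B = B" using \<phi>_\<psi> B by (force simp: image_image)
    then have "\<phi> (lsup L (?\<psi> ` B)) = lsup L' B"
      using ilat_hom_lsup[OF \<phi>] \<psi>_closed B by (metis image_subset_iff subsetD)
    then show ?thesis using \<psi>_\<phi> lsup_closed \<psi>_closed B by (metis image_subset_iff subsetD)
  qed
  moreover have "?\<psi> (mult L' a b) = mult L (?\<psi> a) (?\<psi> b)" if "a \<in> car L'" "b \<in> car L'" for a b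
    using ilat_hom_mult[OF \<phi> \<psi>_closed \<psi>_closed] \<psi>_\<phi>[OF mult_closed] \<phi>_\<psi> \<psi>_closed that by metis
  moreover have "?\<psi> (ltop L') = ltop L"
    using ilat_hom_ltop[OF \<phi>] \<psi>_\<phi>[OF top_closed] by simp
  ultimately show ?thesis
    unfolding ilat_hom_def using \<psi>_closed by blast
qed

lemma semiprime_el_if_ilat_iso:
  assumes L: "ideal_lattice L" and L': "ideal_lattice L'" and \<phi>: "ilat_iso L L' \<phi>"
    and a: "a \<in> car L" and semiprime: "semiprime_el L' (\<phi> a)"
  shows "semiprime_el L a"
  unfolding semiprime_el_def
proof (intro conjI ballI impI)
  interpret ilattice L by (fact ilattice.intro[OF L])
  have hom: "ilat_hom L L' \<phi>" and inv: "ilat_hom L' L (inv_into (car L) \<phi>)"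
    and inj: "inj_on \<phi> (car L)"
    using \<phi> unfolding ilat_iso_def bij_betw_def by blast+
  fix c assume c: "c \<in> car L" and "leq L (mult L c c) a"
  then have "leq L' (mult L' (\<phi> c) (\<phi> c)) (\<phi> a)"
    using ilat_hom_mono[OF L L' hom mult_closed[OF c c] a] ilat_hom_mult[OF hom c c] by simp
  then have "leq L' (\<phi> c) (\<phi> a)"
    using semiprime ilat_hom_closed[OF hom c] unfolding semiprime_el_def by blast
  then show "leq L c a"
    using ilat_hom_mono[OF L' L inv ilat_hom_closed[OF hom c] ilat_hom_closed[OF hom a]]
      inv_into_f_f[OF inj] c a by simp
qed (fact a)

lemma semiprime_el_if_ilat_iso_Lopen:
  assumes "ideal_lattice L" "spectral_space X" "ilat_iso L (Lopen X) \<phi>" "a \<in> car L"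
  shows "semiprime_el L a"
proof (rule semiprime_el_if_ilat_iso[OF assms(1) ideal_lattice_Lopen[OF assms(2)] assms(3,4)])
  show "semiprime_el (Lopen X) (\<phi> a)"
    using ilat_hom_closed assms(3,4) unfolding ilat_iso_def semiprime_el_def by fastforce
qed

context ilattice
begin

lemma le_if_lpow_le_semiprime:
  assumes a: "semiprime_el L a" and c: "c \<in> car L" and le: "leq L (lpow L c n) a"
  shows "leq L c a"
proof -
  have "leq L c a" if "leq L (lpow L c (2 ^ k)) a" for k
    using that
  proof (induction k)
    case (Suc k)
    then have "leq L (mult L (lpow L c (2 ^ k)) (lpow L c (2 ^ k))) a"
      using lpow_add[OF c] by (simp add: mult_2)
    then show ?case
      using Suc.IH a lpow_closed[OF c] unfolding semiprime_el_def by blast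
  qed (use lpow_one[OF c] in simp)
  moreover have "leq L (lpow L c (2 ^ n)) a"
    using trans[OF lpow_antimono[OF c less_imp_le[OF less_exp]] le] lpow_closed c a
    unfolding semiprime_el_def by blast
  ultimately show ?thesis by blast
qed

lemma le_if_Dset_subset:
  assumes a: "semiprime_el L a" and b: "b \<in> car L" and sub: "Dset L b \<subseteq> Dset L a"
  shows "leq L b a"
proof -
  have a_car: "a \<in> car L" using a unfolding semiprime_el_def by blast
  have "leq L c a" if c: "compact_el L c" "leq L c b" for c
  proof -
    have "Dset L c \<subseteq> Dset L a"
      using Dset_mono[OF compact_closed[OF c(1)] b c(2)] sub by blast
    then obtain n where "leq L (lpow L c n) a"
      using lpow_le_if_Dset_subset[OF c(1) a_car] by blast
    then show ?thesis using le_if_lpow_le_semiprime[OF a compact_closed[OF c(1)]] by blast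
  qed
  then have "leq L (lsup L {c. compact_el L c \<and> leq L c b}) a"
    using compact_closed a_car by (intro lsup_least) auto
  then show ?thesis using lsup_compacts_below[OF b] by simp
qed

lemma ilat_iso_Dset:
  assumes semiprime: "\<forall>a\<in>car L. semiprime_el L a"
  shows "ilat_iso L (Lopen (Spec L)) (Dset L)"
proof -
  have "Dset L (lsup L B) = lsup (Lopen (Spec L)) (Dset L ` B)" if B: "B \<subseteq> car L" for B
  proof -
    have "Dset L ` B \<subseteq> {U. openin (Spec L) U}" using openin_Spec_Dset B by blast
    then show ?thesis using Dset_lsup[OF B] by (simp add: lsup_Lopen)
  qed
  then have hom: "ilat_hom L (Lopen (Spec L)) (Dset L)"
    unfolding ilat_hom_def using openin_Spec_Dset Dset_mult
    by (auto simp: ltop_Lopen Dset_top topspace_Spec)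
  have "inj_on (Dset L) (car L)"
    using le_if_Dset_subset semiprime antisym by (intro inj_onI) (metis order_refl)
  moreover have "Dset L ` car L = car (Lopen (Spec L))"
    using openin_Spec by auto
  ultimately have "bij_betw (Dset L) (car L) (car (Lopen (Spec L)))"
    unfolding bij_betw_def by blast
  then show ?thesis
    unfolding ilat_iso_def using hom ilat_hom_inv_into[OF ideal_lattice hom] by blast
qed

end

theorem mainTheorem8:
  fixes L :: "'a ilat" and X :: "'b topology"
  assumes L: "ideal_lattice L" and X: "spectral_space X"
  shows
    \<comment> \<open>the functors are well defined on objects\<close>
    "spectral_space (Spec L) \<and> ideal_lattice (Lopen X) \<and>
     \<comment> \<open>Spec on morphisms\<close>
     (\<forall>(L' :: 'c ilat) \<psi>. ideal_lattice L' \<and> ilat_hom L' L \<psi> \<longrightarrow>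
        continuous_map (Spec L) (Spec L') (spec_map L' L \<psi>)) \<and>
     (\<forall>p\<in>topspace (Spec L). spec_map L L id p = p) \<and>
     (\<forall>(L' :: 'c ilat) (L'' :: 'e ilat) \<psi> \<theta>.
        ideal_lattice L' \<and> ideal_lattice L'' \<and> ilat_hom L' L \<psi> \<and> ilat_hom L'' L' \<theta> \<longrightarrow>
        (\<forall>p\<in>topspace (Spec L). spec_map L'' L (\<psi> \<circ> \<theta>) p = spec_map L'' L' \<theta> (spec_map L' L \<psi> p))) \<and>
     \<comment> \<open>L_open on morphisms\<close>
     (\<forall>(Y :: 'd topology) g. spectral_space Y \<and> continuous_map Y X g \<longrightarrow>
        ilat_hom (Lopen X) (Lopen Y) (Lopen_map Y g)) \<and>
     (\<forall>U. openin X U \<longrightarrow> Lopen_map X id U = U) \<and>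
     (\<forall>(Y :: 'd topology) (Z :: 'f topology) g h.
        spectral_space Y \<and> spectral_space Z \<and> continuous_map Y X g \<and> continuous_map Z Y h \<longrightarrow>
        (\<forall>U. openin X U \<longrightarrow> Lopen_map Z (g \<circ> h) U = Lopen_map Z h (Lopen_map Y g U))) \<and>
     \<comment> \<open>the two assignments are well defined and mutually inverse\<close>
     (\<forall>\<phi>. ilat_hom L (Lopen X) \<phi> \<longrightarrow>
        continuous_map X (Spec L) (adj_Phi L \<phi>) \<and>
        (\<forall>a\<in>car L. adj_Psi L X (adj_Phi L \<phi>) a = \<phi> a)) \<and>
     (\<forall>f. continuous_map X (Spec L) f \<longrightarrow>
        ilat_hom L (Lopen X) (adj_Psi L X f) \<and>
        (\<forall>x\<in>topspace X. adj_Phi L (adj_Psi L X f) x = f x)) \<and>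
     \<comment> \<open>naturality in L and in X\<close>
     (\<forall>(L' :: 'c ilat) \<psi> (Y :: 'd topology) g.
        ideal_lattice L' \<and> ilat_hom L' L \<psi> \<and> spectral_space Y \<and> continuous_map Y X g \<longrightarrow>
        (\<forall>f. continuous_map X (Spec L) f \<longrightarrow>
           (\<forall>a\<in>car L'. adj_Psi L' Y (spec_map L' L \<psi> \<circ> f \<circ> g) a
                         = Lopen_map Y g (adj_Psi L X f (\<psi> a)))) \<and>
        (\<forall>\<phi>. ilat_hom L (Lopen X) \<phi> \<longrightarrow>
           (\<forall>y\<in>topspace Y. adj_Phi L' (Lopen_map Y g \<circ> \<phi> \<circ> \<psi>) y
                         = spec_map L' L \<psi> (adj_Phi L \<phi> (g y))))) \<and>
     \<comment> \<open>L_open is fully faithful\<close>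
     (\<forall>(Y :: 'd topology). spectral_space Y \<longrightarrow>
        (\<forall>g h. continuous_map Y X g \<and> continuous_map Y X h \<and>
              (\<forall>U. openin X U \<longrightarrow> Lopen_map Y g U = Lopen_map Y h U) \<longrightarrow>
              (\<forall>y\<in>topspace Y. g y = h y)) \<and>
        (\<forall>\<phi>. ilat_hom (Lopen X) (Lopen Y) \<phi> \<longrightarrow>
              (\<exists>g. continuous_map Y X g \<and> (\<forall>U. openin X U \<longrightarrow> \<phi> U = Lopen_map Y g U)))) \<and>
     \<comment> \<open>essential image of L_open\<close>
     (\<forall>(Z :: 'd topology) \<phi>. spectral_space Z \<and> ilat_iso L (Lopen Z) \<phi> \<longrightarrow>
        (\<forall>a\<in>car L. semiprime_el L a)) \<and>
     ((\<forall>a\<in>car L. semiprime_el L a) \<longrightarrow>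
        (\<exists>(Z :: 'a topology) \<phi>. spectral_space Z \<and> ilat_iso L (Lopen Z) \<phi>))"
proof -
  interpret ilattice L by (fact ilattice.intro[OF L])
  have t0: "t0_space X" and sober: "\<And>Z. irreducible_closed X Z \<Longrightarrow> \<exists>x\<in>Z. X closure_of {x} = Z"
    using X unfolding spectral_space_def by blast+
  show ?thesis
    unfolding topspace_Spec
    by (intro conjI allI impI ballI; (elim conjE)?;
        (blast intro: spectral_space_Spec ideal_lattice_Lopen[OF X] continuous_map_spec_map[OF L]
          spec_map_id[OF L] spec_map_comp[OF L] prime_closed ilat_hom_Lopen_map
          continuous_map_adj_Phi ilat_hom_adj_Psi adj_Phi_adj_Psi adj_Phi_natural[OF L]
          eq_if_Lopen_map_eq[OF t0] ilat_hom_Lopen_eq_Lopen_map[OF sober]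
          semiprime_el_if_ilat_iso_Lopen[OF L] ilat_iso_Dset
        | simp add: Lopen_map_id Lopen_map_comp adj_Psi_adj_Phi adj_Psi_natural[OF L]))
qed

end
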